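(* Let $T=(V,E)$ be a tree, $w:V\to\mathbb R_{\ge 0}$, and $C$ a total coloring of $V$. For every color $d\in C(V)$ let $$p^*_d=\min\{\mathrm{penalty}_{C,d}(V(T')) : T' \text{ a nonempty connected subtree of } T\}.$$ Then for every convex (total) recoloring $C'$ of $C$, $$\sum_{d\in C(V)} p^*_d\le 2\,\mathrm{cost}_C(C').$$ In particular $\sum_{d\in C(V)}p^*_d\le 2\,\mathrm{OPT}(T,C,w)$.
   Context: For a color $d$ and $U\subseteq V$, $\mathrm{penalty}_{C,d}(U)=w\big(U\setminus C^{-1}(d)\big)+w\big((V\setminus U)\cap C^{-1}(d)\big)$, where $w(X)=\sum_{v\in X}w(v)$. A coloring is convex if each color class induces a connected subtree (or is empty). $\mathrm{cost}_C(C')=w(\{v: C'(v)\neq C(v)\})$, and $\mathrm{OPT}(T,C,w)$ is the minimum of $\mathrm{cost}_C(C')$ over all convex colorings $C'$ of $T$. *)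

theory Defs
  imports Complex_Main
begin

definition graph :: "'a set \<Rightarrow> 'a set set \<Rightarrow> bool" where
  "graph V E \<longleftrightarrow> finite V \<and> (\<forall>e\<in>E. e \<subseteq> V \<and> card e = 2)"

definition adj_in :: "'a set set \<Rightarrow> 'a set \<Rightarrow> ('a \<times> 'a) set" where
  "adj_in E U = {(a, b). {a, b} \<in> E \<and> a \<in> U \<and> b \<in> U}"

definition connected_in :: "'a set set \<Rightarrow> 'a set \<Rightarrow> bool" where
  "connected_in E U \<longleftrightarrow> U \<noteq> {} \<and> (\<forall>x\<in>U. \<forall>y\<in>U. (x, y) \<in> (adj_in E U)\<^sup>*)"

definition is_cycle :: "'a set set \<Rightarrow> 'a list \<Rightarrow> bool" where
  "is_cycle E vs \<longleftrightarrow> length vs \<ge> 3 \<and> distinct vs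
     \<and> (\<forall>i < length vs - 1. {vs ! i, vs ! Suc i} \<in> E) \<and> {last vs, hd vs} \<in> E"

definition tree :: "'a set \<Rightarrow> 'a set set \<Rightarrow> bool" where
  "tree V E \<longleftrightarrow> graph V E \<and> connected_in E V \<and> (\<nexists>vs. is_cycle E vs)"

definition wt :: "('a \<Rightarrow> real) \<Rightarrow> 'a set \<Rightarrow> real" where
  "wt w X = (\<Sum>v\<in>X. w v)"

definition penalty :: "'a set \<Rightarrow> ('a \<Rightarrow> real) \<Rightarrow> ('a \<Rightarrow> 'c) \<Rightarrow> 'c \<Rightarrow> 'a set \<Rightarrow> real" where
  "penalty V w C d U = wt w {v \<in> U. C v \<noteq> d} + wt w {v \<in> V - U. C v = d}"

definition convex_coloring :: "'a set \<Rightarrow> 'a set set \<Rightarrow> ('a \<Rightarrow> 'c) \<Rightarrow> bool" where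
  "convex_coloring V E C' \<longleftrightarrow>
     (\<forall>d. {v \<in> V. C' v = d} = {} \<or> connected_in E {v \<in> V. C' v = d})"

definition cost :: "'a set \<Rightarrow> ('a \<Rightarrow> real) \<Rightarrow> ('a \<Rightarrow> 'c) \<Rightarrow> ('a \<Rightarrow> 'c) \<Rightarrow> real" where
  "cost V w C C' = wt w {v \<in> V. C' v \<noteq> C v}"

definition OPT :: "'a set \<Rightarrow> 'a set set \<Rightarrow> ('a \<Rightarrow> 'c) \<Rightarrow> ('a \<Rightarrow> real) \<Rightarrow> real" where
  "OPT V E C w = Inf {cost V w C C' | C'. convex_coloring V E C'}"

definition pstar :: "'a set \<Rightarrow> 'a set set \<Rightarrow> ('a \<Rightarrow> real) \<Rightarrow> ('a \<Rightarrow> 'c) \<Rightarrow> 'c \<Rightarrow> real" where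
  "pstar V E w C d = Min {penalty V w C d U | U. U \<subseteq> V \<and> connected_in E U}"

end

theory Submission
  imports Defs
begin

(* Fix a convex recoloring C'. For a color d whose class K_d = C'^{-1}(d) is nonempty, K_d is a
   connected subtree, so p*_d is at most penalty(K_d): the weight of the vertices recolored to d
   plus that of the vertices recolored away from d. If K_d is empty, a single vertex of original
   color d gives the same bound. Summed over d, each recolored vertex is counted once in each of
   the two kinds of terms, so the total is at most twice the cost of C'. *)

lemma wt_nonneg: "\<forall>v\<in>X. w v \<ge> 0 \<Longrightarrow> wt w X \<ge> 0"
  unfolding wt_def by (rule sum_nonneg) auto

lemma wt_mono: "finite B \<Longrightarrow> A \<subseteq> B \<Longrightarrow> \<forall>v\<in>B. w v \<ge> 0 \<Longrightarrow> wt w A \<le> wt w B"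
  unfolding wt_def by (rule sum_mono2) auto

lemma sum_wt_fibres_le:
  assumes "finite V" and "\<forall>v\<in>V. w v \<ge> 0" and "finite D"
  shows "(\<Sum>d\<in>D. wt w {v\<in>V. f v = d \<and> P v}) \<le> wt w {v\<in>V. P v}"
proof -
  have "(\<Sum>d\<in>D. wt w {v\<in>V. f v = d \<and> P v}) = wt w (\<Union>d\<in>D. {v\<in>V. f v = d \<and> P v})"
    unfolding wt_def using assms by (subst sum.UNION_disjoint) auto
  also have "\<dots> \<le> wt w {v\<in>V. P v}"
    using assms by (intro wt_mono) auto
  finally show ?thesis .
qed

lemma penalty_color_class:
  "penalty V w C d {v\<in>V. C' v = d}
     = wt w {v\<in>V. C' v = d \<and> C' v \<noteq> C v} + wt w {v\<in>V. C v = d \<and> C' v \<noteq> C v}"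
  unfolding penalty_def by (intro arg_cong2[where f="(+)"] arg_cong[where f="wt w"]) auto

lemma pstar_le_penalty:
  assumes "finite V" and "U \<subseteq> V" and "connected_in E U"
  shows "pstar V E w C d \<le> penalty V w C d U"
proof -
  have "{penalty V w C d U | U. U \<subseteq> V \<and> connected_in E U} \<subseteq> penalty V w C d ` Pow V"
    by auto
  then have "finite {penalty V w C d U | U. U \<subseteq> V \<and> connected_in E U}"
    using assms(1) by (meson finite_Pow_iff finite_imageI finite_subset)
  then show ?thesis
    unfolding pstar_def using assms(2,3) by (intro Min_le) blast+
qed

lemma pstar_le_recolored:
  assumes "finite V" and "\<forall>v\<in>V. w v \<ge> 0" and "convex_coloring V E C'" and "d \<in> C ` V"
  shows "pstar V E w C d
           \<le> wt w {v\<in>V. C' v = d \<and> C' v \<noteq> C v} + wt w {v\<in>V. C v = d \<and> C' v \<noteq> C v}"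
proof (cases "{v\<in>V. C' v = d} = {}")
  case False
  with assms(3) have "connected_in E {v\<in>V. C' v = d}"
    unfolding convex_coloring_def by blast
  with assms(1) have "pstar V E w C d \<le> penalty V w C d {v\<in>V. C' v = d}"
    by (intro pstar_le_penalty) auto
  then show ?thesis
    by (simp only: penalty_color_class)
next
  case True
  from assms(4) obtain v0 where v0: "v0 \<in> V" "C v0 = d" by auto
  have "connected_in E {v0}" unfolding connected_in_def by auto
  with assms(1) v0 have "pstar V E w C d \<le> penalty V w C d {v0}"
    by (intro pstar_le_penalty) auto
  also have "\<dots> = wt w {v\<in>V - {v0}. C v = d}"
    using v0 unfolding penalty_def by (simp add: wt_def Collect_conj_eq)
  also have "\<dots> \<le> wt w {v\<in>V. C v = d \<and> C' v \<noteq> C v}"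
    using True assms(1,2) v0 by (intro wt_mono) auto
  also have "\<dots> \<le> wt w {v\<in>V. C' v = d \<and> C' v \<noteq> C v} + wt w {v\<in>V. C v = d \<and> C' v \<noteq> C v}"
    using assms(2) by (simp add: wt_nonneg)
  finally show ?thesis .
qed

lemma sum_pstar_le_twice_cost:
  assumes "finite V" and "\<forall>v\<in>V. w v \<ge> 0" and "convex_coloring V E C'"
  shows "(\<Sum>d\<in>C ` V. pstar V E w C d) \<le> 2 * cost V w C C'"
proof -
  let ?to = "\<lambda>d. wt w {v\<in>V. C' v = d \<and> C' v \<noteq> C v}"
  let ?from = "\<lambda>d. wt w {v\<in>V. C v = d \<and> C' v \<noteq> C v}"
  have "(\<Sum>d\<in>C ` V. pstar V E w C d) \<le> (\<Sum>d\<in>C ` V. ?to d + ?from d)"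
    using assms by (intro sum_mono pstar_le_recolored) auto
  also have "\<dots> = (\<Sum>d\<in>C ` V. ?to d) + (\<Sum>d\<in>C ` V. ?from d)"
    by (rule sum.distrib)
  also have "\<dots> \<le> cost V w C C' + cost V w C C'"
    unfolding cost_def using assms(1,2)
    by (intro add_mono sum_wt_fibres_le) auto
  finally show ?thesis by simp
qed

lemma convex_coloring_const:
  "connected_in E V \<Longrightarrow> convex_coloring V E (\<lambda>_. c)"
  unfolding convex_coloring_def by auto

theorem mainTheorem3:
  fixes V :: "'a set" and E :: "'a set set" and w :: "'a \<Rightarrow> real" and C :: "'a \<Rightarrow> 'c"
  assumes "tree V E"
    and "\<forall>v\<in>V. w v \<ge> 0"
  shows "(\<forall>C' :: 'a \<Rightarrow> 'c. convex_coloring V E C' \<longrightarrow>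
            (\<Sum>d\<in>C ` V. pstar V E w C d) \<le> 2 * cost V w C C')
         \<and> (\<Sum>d\<in>C ` V. pstar V E w C d) \<le> 2 * OPT V E C w"
proof -
  have fin: "finite V" and conn: "connected_in E V"
    using assms(1) unfolding tree_def graph_def by auto
  have bound: "\<forall>C' :: 'a \<Rightarrow> 'c. convex_coloring V E C' \<longrightarrow>
                 (\<Sum>d\<in>C ` V. pstar V E w C d) \<le> 2 * cost V w C C'"
    using sum_pstar_le_twice_cost[OF fin assms(2)] by blast
  have "convex_coloring V E (\<lambda>_. undefined :: 'c)"
    using conn by (rule convex_coloring_const)
  then have "{cost V w C C' | C'. convex_coloring V E C'} \<noteq> {}"
    by blast
  then have "(\<Sum>d\<in>C ` V. pstar V E w C d) / 2 \<le> OPT V E C w"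
    unfolding OPT_def by (rule cInf_greatest) (use bound in fastforce)
  with bound show ?thesis by simp
qed

end
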